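(* Every Augé–Tapia operator of finite type is recurrent but not quasi-rigid.
   Context: Let $X$ be a separable infinite-dimensional complex Banach space and $T$ a bounded linear operator on $X$. Put $A_T=\{x\in X:\lim_n\|T^nx\|=\infty\}$. A vector $x$ is recurrent if $T^{\omega_n}x\to x$ for some strictly increasing sequence $(\omega_n)$ of positive integers; $\mathrm{Rec}(T)$ is the set of recurrent vectors and $T$ is recurrent if $\mathrm{Rec}(T)$ is dense. $\mathfrak{C}$ is the set of strictly increasing sequences $\omega=(\omega_n)$ of positive integers such that $T^{\omega_n}x\to x$ for some $x\neq0$, and $\mathfrak{L}(\omega)=\{x:T^{\omega_n}x\to x\}$. $T$ is quasi-rigid if $\mathfrak{L}(\omega)$ is dense for some $\omega\in\mathfrak{C}$. A subset $F$ of a Banach space $V$ is asymptotically separated if there is a sequence $(g_n)$ of continuous linear functionals with $\liminf_n|g_n(x)|=0$ for all $x\in F$ and $\lim_n|g_n(x)|=+\infty$ for all $x\notin F$. $T$ is an Augé–Tapia operator of finite type $n$ if there exist an $n$-dimensional subspace $V\subset X$, a bounded linear projection $\mathbb{P}$ of $X$ onto $V$, and an asymptotically separated set $F\subset V$ with both $F$ and $V\setminus F$ dense in $V$, such that $A_T=\mathbb{P}^{-1}(V\setminus F)$ and $\mathrm{Rec}(T)=\mathbb{P}^{-1}(F)$. *)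

theory Defs
  imports "HOL-Analysis.Analysis"
begin

section \<open>Complex Banach spaces (HOL has only real vector spaces)\<close>

class complex_vector_space = real_vector +
  fixes scaleC :: "complex \<Rightarrow> 'a \<Rightarrow> 'a"
  assumes scaleC_of_real: "scaleC (complex_of_real r) x = scaleR r x"
    and scaleC_add_right: "scaleC a (x + y) = scaleC a x + scaleC a y"
    and scaleC_add_left: "scaleC (a + b) x = scaleC a x + scaleC b x"
    and scaleC_scaleC: "scaleC a (scaleC b x) = scaleC (a * b) x"
    and scaleC_one: "scaleC 1 x = x"

class complex_normed_space = complex_vector_space + real_normed_vector +
  assumes norm_scaleC: "norm (scaleC a x) = cmod a * norm x"

class complex_banach_space = complex_normed_space + banach

definition bounded_clinear_op :: "('a::complex_normed_space \<Rightarrow> 'b::complex_normed_space) \<Rightarrow> bool" where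
  "bounded_clinear_op f \<longleftrightarrow> bounded_linear f \<and> (\<forall>c x. f (scaleC c x) = scaleC c (f x))"

definition has_cdim :: "'a::complex_vector_space set \<Rightarrow> nat \<Rightarrow> bool" where
  "has_cdim V n \<longleftrightarrow> (\<exists>b :: nat \<Rightarrow> 'a.
      V = {(\<Sum>i<n. scaleC (c i) (b i)) | c. True} \<and>
      (\<forall>c. (\<Sum>i<n. scaleC (c i) (b i)) = 0 \<longrightarrow> (\<forall>i<n. c i = 0)))"

definition separable_type :: "'a::topological_space itself \<Rightarrow> bool" where
  "separable_type _ \<longleftrightarrow> (\<exists>D :: 'a set. countable D \<and> closure D = UNIV)"

definition infinite_cdim :: "'a::complex_vector_space itself \<Rightarrow> bool" where
  "infinite_cdim _ \<longleftrightarrow> \<not> (\<exists>n. has_cdim (UNIV :: 'a set) n)"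

definition A_T :: "('a::real_normed_vector \<Rightarrow> 'a) \<Rightarrow> 'a set" where
  "A_T T = {x. filterlim (\<lambda>n. norm ((T ^^ n) x)) at_top sequentially}"

definition Rec :: "('a::real_normed_vector \<Rightarrow> 'a) \<Rightarrow> 'a set" where
  "Rec T = {x. \<exists>\<omega> :: nat \<Rightarrow> nat. strict_mono \<omega> \<and> (\<forall>n. 0 < \<omega> n) \<and>
                 (\<lambda>n. (T ^^ \<omega> n) x) \<longlonglongrightarrow> x}"

definition recurrent :: "('a::real_normed_vector \<Rightarrow> 'a) \<Rightarrow> bool" where
  "recurrent T \<longleftrightarrow> closure (Rec T) = UNIV"

definition LL :: "('a::real_normed_vector \<Rightarrow> 'a) \<Rightarrow> (nat \<Rightarrow> nat) \<Rightarrow> 'a set" where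
  "LL T \<omega> = {x. (\<lambda>n. (T ^^ \<omega> n) x) \<longlonglongrightarrow> x}"

definition CC :: "('a::real_normed_vector \<Rightarrow> 'a) \<Rightarrow> (nat \<Rightarrow> nat) set" where
  "CC T = {\<omega>. strict_mono \<omega> \<and> (\<forall>n. 0 < \<omega> n) \<and> (\<exists>x. x \<noteq> 0 \<and> x \<in> LL T \<omega>)}"

definition quasi_rigid :: "('a::real_normed_vector \<Rightarrow> 'a) \<Rightarrow> bool" where
  "quasi_rigid T \<longleftrightarrow> (\<exists>\<omega>\<in>CC T. closure (LL T \<omega>) = UNIV)"

text \<open>Continuous complex-linear functional on the subspace V (values off V are irrelevant).\<close>
definition cont_lin_functional_on :: "'a::complex_normed_space set \<Rightarrow> ('a \<Rightarrow> complex) \<Rightarrow> bool" where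
  "cont_lin_functional_on V g \<longleftrightarrow>
     (\<forall>x\<in>V. \<forall>y\<in>V. g (x + y) = g x + g y) \<and>
     (\<forall>c. \<forall>x\<in>V. g (scaleC c x) = c * g x) \<and> continuous_on V g"

definition asymp_separated :: "'a::complex_normed_space set \<Rightarrow> 'a set \<Rightarrow> bool" where
  "asymp_separated V F \<longleftrightarrow> (\<exists>g :: nat \<Rightarrow> 'a \<Rightarrow> complex.
     (\<forall>n. cont_lin_functional_on V (g n)) \<and>
     (\<forall>x\<in>F. liminf (\<lambda>n. ereal (cmod (g n x))) = 0) \<and>
     (\<forall>x\<in>V - F. filterlim (\<lambda>n. cmod (g n x)) at_top sequentially))"

definition bounded_projection_onto :: "('a::complex_normed_space \<Rightarrow> 'a) \<Rightarrow> 'a set \<Rightarrow> bool" where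
  "bounded_projection_onto P V \<longleftrightarrow> bounded_clinear_op P \<and> range P = V \<and> (\<forall>v\<in>V. P v = v)"

definition auge_tapia_finite_type :: "('a::complex_normed_space \<Rightarrow> 'a) \<Rightarrow> nat \<Rightarrow> bool" where
  "auge_tapia_finite_type T n \<longleftrightarrow> (\<exists>V P F.
     has_cdim V n \<and> bounded_projection_onto P V \<and> F \<subseteq> V \<and>
     asymp_separated V F \<and> V \<subseteq> closure F \<and> V \<subseteq> closure (V - F) \<and>
     A_T T = P -` (V - F) \<and> Rec T = P -` F)"

end

theory Submission
  imports Defs
begin

text \<open>The recurrent vectors form the preimage \<open>\<bbbP>\<^sup>-\<^sup>1(F)\<close> of a dense subset of \<open>V\<close>
  under a bounded projection, so they are dense. If some \<open>\<mathfrak>L(\<omega>)\<close> were dense, then,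
  being a linear subspace of recurrent vectors, its image under \<open>\<bbbP>\<close> would be a subspace of
  \<open>V\<close> contained in \<open>F\<close>; as \<open>V\<close> is finite-dimensional this image is closed, and it is dense in
  \<open>V\<close>, so it is all of \<open>V\<close>. Then \<open>V \<subseteq> F\<close>, contradicting the density of \<open>V - F\<close> in \<open>V\<close>.\<close>

lemma abs_mult_infdist_le_norm:
  fixes v :: "'a::real_normed_vector"
  assumes "subspace M" "m \<in> M"
  shows "\<bar>t\<bar> * infdist v M \<le> norm (m + t *\<^sub>R v)"
proof (cases "t = 0")
  case False
  have "infdist v M \<le> dist v ((- 1 / t) *\<^sub>R m)"
    using assms by (intro infdist_le subspace_scale)
  then have "infdist v M \<le> norm (v + (1 / t) *\<^sub>R m)"
    by (simp add: dist_norm)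
  then have "\<bar>t\<bar> * infdist v M \<le> norm (t *\<^sub>R (v + (1 / t) *\<^sub>R m))"
    by (simp add: mult_left_mono)
  also have "t *\<^sub>R (v + (1 / t) *\<^sub>R m) = m + t *\<^sub>R v"
    using False by (simp add: algebra_simps)
  finally show ?thesis .
qed simp

lemma closed_span_insert:
  fixes v :: "'a::real_normed_vector"
  assumes closed: "closed (span S)"
  shows "closed (span (insert v S))"
proof (cases "v \<in> span S")
  case True
  then show ?thesis using closed by (simp add: span_redundant)
next
  case False
  define d where "d = infdist v (span S)"
  have "d > 0"
    unfolding d_def using infdist_pos_not_in_closed[of "span S" v] closed False span_zero by blast
  show ?thesis
    unfolding span_insert closed_sequential_limits
  proof (intro allI impI, elim conjE)
    fix x l
    assume "\<forall>n. x n \<in> {x. \<exists>k. x - k *\<^sub>R v \<in> span S}" and lim: "x \<longlonglongrightarrow> l"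
    then have "\<forall>n. \<exists>k. x n - k *\<^sub>R v \<in> span S" by simp
    then obtain t where t: "\<And>n. x n - t n *\<^sub>R v \<in> span S" by metis
    \<comment> \<open>\<open>v\<close> keeps positive distance from \<open>span S\<close>, so the coefficients of \<open>v\<close> are Cauchy\<close>
    have coeff_bound: "\<bar>t i - t j\<bar> * d \<le> dist (x i) (x j)" for i j
    proof -
      have "(x i - t i *\<^sub>R v) - (x j - t j *\<^sub>R v) \<in> span S"
        using t by (simp add: span_diff)
      from abs_mult_infdist_le_norm[OF subspace_span this, of "t i - t j" v]
      moreover have "(x i - t i *\<^sub>R v) - (x j - t j *\<^sub>R v) + (t i - t j) *\<^sub>R v = x i - x j"
        by (simp add: algebra_simps)
      ultimately show ?thesis by (simp add: d_def dist_norm)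
    qed
    have "Cauchy t"
    proof (unfold Cauchy_def, intro allI impI)
      fix e :: real
      assume "e > 0"
      with \<open>d > 0\<close> LIMSEQ_imp_Cauchy[OF lim] obtain N
        where N: "\<And>m n. m \<ge> N \<Longrightarrow> n \<ge> N \<Longrightarrow> dist (x m) (x n) < e * d"
        unfolding Cauchy_def by (metis mult_pos_pos)
      show "\<exists>N. \<forall>m\<ge>N. \<forall>n\<ge>N. dist (t m) (t n) < e"
      proof (intro exI allI impI)
        fix m n
        assume "m \<ge> N" "n \<ge> N"
        then have "\<bar>t m - t n\<bar> * d < e * d"
          using coeff_bound[of m n] N by (meson order_le_less_trans)
        then show "dist (t m) (t n) < e" using \<open>d > 0\<close> by (simp add: dist_real_def)
      qed
    qed
    then obtain \<tau> where "t \<longlonglongrightarrow> \<tau>" using Cauchy_convergent_iff convergent_def by blast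
    then have "(\<lambda>n. x n - t n *\<^sub>R v) \<longlonglongrightarrow> l - \<tau> *\<^sub>R v"
      by (intro tendsto_intros lim)
    then have "l - \<tau> *\<^sub>R v \<in> span S" by (rule closed_sequentially[OF closed t])
    then show "l \<in> {x. \<exists>k. x - k *\<^sub>R v \<in> span S}" by blast
  qed
qed

lemma closed_span_finite:
  fixes S :: "'a::real_normed_vector set"
  assumes "finite S"
  shows "closed (span S)"
  using assms
proof (induction S rule: finite_induct)
  case empty
  then show ?case by simp
next
  case (insert v S)
  from insert.IH show ?case by (rule closed_span_insert)
qed

lemma closed_subspace_finite_span:
  fixes W :: "'a::real_normed_vector set"
  assumes "subspace W" "finite B" "W \<subseteq> span B"
  shows "closed W"
proof -
  obtain C where C: "C \<subseteq> W" "independent C" "W \<subseteq> span C"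
    using basis_exists[of W] by metis
  have "C \<subseteq> span B" using C(1) assms(3) by (rule order_trans)
  then have "finite C" using independent_span_bound[OF assms(2) C(2)] by blast
  moreover have "W = span C"
    using C(3) span_minimal[OF C(1) assms(1)] by (rule antisym)
  ultimately show ?thesis by (simp add: closed_span_finite)
qed

lemma scaleC_eq_scaleR_combination:
  fixes x :: "'a::complex_vector_space"
  shows "scaleC c x = Re c *\<^sub>R x + Im c *\<^sub>R scaleC \<i> x"
proof -
  have "c = complex_of_real (Re c) + complex_of_real (Im c) * \<i>"
    by (simp add: complex_eq mult.commute)
  then have "scaleC c x = scaleC (complex_of_real (Re c)) x + scaleC (complex_of_real (Im c) * \<i>) x"
    by (metis scaleC_add_left)
  also have "\<dots> = Re c *\<^sub>R x + Im c *\<^sub>R scaleC \<i> x"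
    by (simp add: scaleC_of_real flip: scaleC_scaleC)
  finally show ?thesis .
qed

lemma has_cdim_imp_finite_span:
  fixes V :: "'a::complex_vector_space set"
  assumes "has_cdim V n"
  obtains B where "finite B" "V \<subseteq> span B"
proof -
  obtain b :: "nat \<Rightarrow> 'a" where V: "V = {(\<Sum>i<n. scaleC (c i) (b i)) | c. True}"
    using assms unfolding has_cdim_def by blast
  define B where "B = b ` {..<n} \<union> (\<lambda>i. scaleC \<i> (b i)) ` {..<n}"
  have "scaleC c (b i) \<in> span B" if "i < n" for c i
  proof -
    have "b i \<in> span B" "scaleC \<i> (b i) \<in> span B"
      using that unfolding B_def by (auto intro: span_base)
    then show ?thesis by (subst scaleC_eq_scaleR_combination) (intro span_add span_scale)
  qed
  then have "V \<subseteq> span B"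
    unfolding V by (auto intro: span_sum)
  moreover have "finite B" unfolding B_def by simp
  ultimately show ?thesis using that by blast
qed

lemma linear_funpow:
  fixes T :: "'a::real_vector \<Rightarrow> 'a"
  assumes "linear T"
  shows "linear (T ^^ k)"
proof (induction k)
  case 0
  show ?case by (simp add: linear_id[unfolded id_def])
next
  case (Suc k)
  then show ?case using linear_compose[OF Suc assms] by (simp add: o_def)
qed

lemma subspace_LL:
  fixes T :: "'a::real_normed_vector \<Rightarrow> 'a"
  assumes "linear T"
  shows "subspace (LL T \<omega>)"
  unfolding subspace_def
proof (intro conjI ballI allI)
  note lin = linear_funpow[OF assms]
  show "0 \<in> LL T \<omega>" by (simp add: LL_def linear_0[OF lin])
  fix x y c
  assume x: "x \<in> LL T \<omega>"
  then show "c *\<^sub>R x \<in> LL T \<omega>"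
    unfolding LL_def by (simp add: linear_scale[OF lin] tendsto_scaleR)
  assume "y \<in> LL T \<omega>"
  with x show "x + y \<in> LL T \<omega>"
    unfolding LL_def by (simp add: linear_add[OF lin] tendsto_add)
qed

lemma LL_subset_Rec:
  assumes "strict_mono \<omega>" "\<forall>n. 0 < \<omega> n"
  shows "LL T \<omega> \<subseteq> Rec T"
  using assms unfolding LL_def Rec_def by blast

lemma closure_vimage_projection:
  fixes P :: "'a::real_normed_vector \<Rightarrow> 'a"
  assumes "linear P" "\<And>v. v \<in> V \<Longrightarrow> P v = v" "range P \<subseteq> V" "F \<subseteq> V" "V \<subseteq> closure F"
  shows "closure (P -` F) = UNIV"
proof -
  have "x \<in> closure (P -` F)" for x
  proof (unfold closure_approachable, intro allI impI)
    fix e :: real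
    assume "e > 0"
    have "P x \<in> V" using assms(3) by blast
    then have "P x \<in> closure F" using assms(5) by blast
    with \<open>e > 0\<close> obtain f where f: "f \<in> F" "dist f (P x) < e"
      using closure_approachable by metis
    have "P (x - P x + f) = f"
      using assms(1,2,4) \<open>P x \<in> V\<close> f(1) by (auto simp: linear_add linear_diff)
    moreover have "dist (x - P x + f) x = dist f (P x)"
      by (simp add: dist_norm algebra_simps)
    ultimately show "\<exists>y\<in>P -` F. dist y x < e"
      using f by (intro bexI[where x = "x - P x + f"]) simp_all
  qed
  then show ?thesis by blast
qed

lemma subset_closure_projection_image:
  assumes "bounded_linear P" "\<And>v. v \<in> V \<Longrightarrow> P v = v" "closure L = UNIV"
  shows "V \<subseteq> closure (P ` L)"
proof
  fix v
  assume "v \<in> V"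
  then have "v \<in> P ` closure L" using assms(2,3) by (metis UNIV_I image_eqI)
  then show "v \<in> closure (P ` L)"
    using closure_bounded_linear_image_subset[OF assms(1)] by blast
qed

lemma auge_tapia_recurrent:
  assumes "auge_tapia_finite_type T n"
  shows "recurrent T"
proof -
  obtain V P F where proj: "bounded_projection_onto P V" and "F \<subseteq> V" "V \<subseteq> closure F"
    and "Rec T = P -` F"
    using assms unfolding auge_tapia_finite_type_def by blast
  have "linear P" "range P = V" "\<And>v. v \<in> V \<Longrightarrow> P v = v"
    using proj unfolding bounded_projection_onto_def bounded_clinear_op_def
    by (auto simp: bounded_linear.linear)
  then show ?thesis
    unfolding recurrent_def \<open>Rec T = P -` F\<close>
    using \<open>F \<subseteq> V\<close> \<open>V \<subseteq> closure F\<close> by (intro closure_vimage_projection) auto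
qed

lemma auge_tapia_not_quasi_rigid:
  assumes "bounded_linear T" "auge_tapia_finite_type T n"
  shows "\<not> quasi_rigid T"
proof
  assume "quasi_rigid T"
  then obtain \<omega> where "\<omega> \<in> CC T" and dense: "closure (LL T \<omega>) = UNIV"
    unfolding quasi_rigid_def by blast
  then have "LL T \<omega> \<subseteq> Rec T" unfolding CC_def by (intro LL_subset_Rec) auto
  obtain V P F where "has_cdim V n" and proj: "bounded_projection_onto P V"
    and "F \<subseteq> V" and dense_compl: "V \<subseteq> closure (V - F)" and "Rec T = P -` F"
    using assms(2) unfolding auge_tapia_finite_type_def by blast
  have P: "bounded_linear P" "range P = V" "\<And>v. v \<in> V \<Longrightarrow> P v = v"
    using proj unfolding bounded_projection_onto_def bounded_clinear_op_def by auto
  define W where "W = P ` LL T \<omega>"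
  have "W \<subseteq> F" unfolding W_def using \<open>LL T \<omega> \<subseteq> Rec T\<close> \<open>Rec T = P -` F\<close> by blast
  obtain B where "finite B" "V \<subseteq> span B" using has_cdim_imp_finite_span[OF \<open>has_cdim V n\<close>] .
  moreover have "subspace W"
    unfolding W_def using P(1) assms(1)
    by (intro linear_subspace_image subspace_LL) (simp_all add: bounded_linear.linear)
  moreover have "W \<subseteq> span B" using \<open>W \<subseteq> F\<close> \<open>F \<subseteq> V\<close> \<open>V \<subseteq> span B\<close> by blast
  ultimately have "closure W = W" by (simp add: closed_subspace_finite_span)
  moreover have "V \<subseteq> closure W"
    unfolding W_def using subset_closure_projection_image[OF P(1,3) dense] .
  ultimately have "V - F = {}" using \<open>W \<subseteq> F\<close> by blast
  with dense_compl have "V \<subseteq> closure {}" by (simp only:)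
  then show False using P(2) by auto
qed

theorem theorem3p6:
  fixes T :: "'a::complex_banach_space \<Rightarrow> 'a" and n :: nat
  assumes "separable_type TYPE('a)"
    and "infinite_cdim TYPE('a)"
    and "bounded_clinear_op T"
    and "auge_tapia_finite_type T n"
  shows "recurrent T \<and> \<not> quasi_rigid T"
proof
  show "recurrent T" using assms(4) by (rule auge_tapia_recurrent)
  have "bounded_linear T" using assms(3) unfolding bounded_clinear_op_def by simp
  then show "\<not> quasi_rigid T" using assms(4) by (rule auge_tapia_not_quasi_rigid)
qed

end
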